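(* Let $n\ge 2$, let $c_1,\dots,c_n\ge 2$ be integers, let $d$ be prime, and let $f:\mathbb{Z}_{c_1}\times\cdots\times\mathbb{Z}_{c_n}\to\mathbb{Z}_d$ be any function. Then the distribution $$p(\mathbf{m}|\mathbf{s})=\begin{cases} d^{1-n} & \text{if } \sum_{j=1}^n m_j\equiv f(\mathbf{s}) \pmod d,\\ 0&\text{otherwise},\end{cases}$$ is non-signaling and satisfies $p\big(\sum_j m_j\equiv f(\mathbf{s})\,\big|\,\mathbf{s}\big)=1$ for every $\mathbf{s}$. Moreover, it is the unique non-signaling distribution $p(\mathbf{m}|\mathbf{s})$ satisfying $p\big(\sum_j m_j\equiv f(\mathbf{s})\,\big|\,\mathbf{s}\big)=1$ for all $\mathbf{s}$ if and only if $f$ is not bi-partite linear.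
   Context: A conditional distribution $p(\mathbf{m}|\mathbf{s})$ with $\mathbf{m}\in\mathbb{Z}_d^n$, $\mathbf{s}\in\prod_j\mathbb{Z}_{c_j}$ (nonnegative, summing to 1 over $\mathbf{m}$ for each $\mathbf{s}$) is non-signaling if for every subset $S\subseteq\{1,\dots,n\}$ the marginal distribution of the outcomes $(m_j)_{j\in S}$ depends only on $(s_j)_{j\in S}$. A bipartition $\{A,B\}$ of $\{1,\dots,n\}$ is a division into two disjoint non-empty sets with $A\cup B=\{1,\dots,n\}$. The function $f$ is bi-partite linear if there exists a bipartition $\{A,B\}$ and functions $f^A$ of $\mathbf{s}^A=(s_j)_{j\in A}$ and $f^B$ of $\mathbf{s}^B=(s_j)_{j\in B}$, valued in $\mathbb{Z}_d$, with $f(\mathbf{s})=f^A(\mathbf{s}^A)+f^B(\mathbf{s}^B)$ (mod $d$) for all $\mathbf{s}$. *)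

theory Defs
  imports Complex_Main "HOL-Library.FuncSet" "HOL-Computational_Algebra.Primes"
begin

text \<open>Parties are indexed by 0..n-1. Input strings s are extensional functions
  with s j < c j, outcome strings m are extensional functions with m j < d.\<close>

definition Ins :: "nat \<Rightarrow> (nat \<Rightarrow> nat) \<Rightarrow> (nat \<Rightarrow> nat) set" where
  "Ins n c = PiE {..<n} (\<lambda>j. {..<c j})"

definition Outs :: "nat \<Rightarrow> nat \<Rightarrow> (nat \<Rightarrow> nat) set" where
  "Outs n d = PiE {..<n} (\<lambda>_. {..<d})"

text \<open>p m s is the probability of outcome m given input s.\<close>
definition is_cond_dist ::
  "nat \<Rightarrow> nat \<Rightarrow> (nat \<Rightarrow> nat) \<Rightarrow> ((nat \<Rightarrow> nat) \<Rightarrow> (nat \<Rightarrow> nat) \<Rightarrow> real) \<Rightarrow> bool" where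
  "is_cond_dist n d c p \<longleftrightarrow>
     (\<forall>s\<in>Ins n c. (\<forall>m\<in>Outs n d. p m s \<ge> 0) \<and> (\<Sum>m\<in>Outs n d. p m s) = 1)"

definition marginal ::
  "nat \<Rightarrow> nat \<Rightarrow> ((nat \<Rightarrow> nat) \<Rightarrow> (nat \<Rightarrow> nat) \<Rightarrow> real) \<Rightarrow> nat set \<Rightarrow> (nat \<Rightarrow> nat) \<Rightarrow> (nat \<Rightarrow> nat) \<Rightarrow> real" where
  "marginal n d p S s mS = (\<Sum>m\<in>{m\<in>Outs n d. restrict m S = mS}. p m s)"

definition non_signaling ::
  "nat \<Rightarrow> nat \<Rightarrow> (nat \<Rightarrow> nat) \<Rightarrow> ((nat \<Rightarrow> nat) \<Rightarrow> (nat \<Rightarrow> nat) \<Rightarrow> real) \<Rightarrow> bool" where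
  "non_signaling n d c p \<longleftrightarrow>
     (\<forall>S. S \<subseteq> {..<n} \<longrightarrow>
        (\<forall>s\<in>Ins n c. \<forall>s'\<in>Ins n c. restrict s S = restrict s' S \<longrightarrow>
           (\<forall>mS. marginal n d p S s mS = marginal n d p S s' mS)))"

definition prob_sum_eq ::
  "nat \<Rightarrow> nat \<Rightarrow> ((nat \<Rightarrow> nat) \<Rightarrow> nat) \<Rightarrow> ((nat \<Rightarrow> nat) \<Rightarrow> (nat \<Rightarrow> nat) \<Rightarrow> real) \<Rightarrow> (nat \<Rightarrow> nat) \<Rightarrow> real" where
  "prob_sum_eq n d f p s =
     (\<Sum>m\<in>{m\<in>Outs n d. (\<Sum>j<n. m j) mod d = f s mod d}. p m s)"

definition bipartite_linear ::
  "nat \<Rightarrow> nat \<Rightarrow> (nat \<Rightarrow> nat) \<Rightarrow> ((nat \<Rightarrow> nat) \<Rightarrow> nat) \<Rightarrow> bool" where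
  "bipartite_linear n d c f \<longleftrightarrow>
     (\<exists>A B. A \<noteq> {} \<and> B \<noteq> {} \<and> A \<inter> B = {} \<and> A \<union> B = {..<n} \<and>
        (\<exists>fA fB. (\<forall>s\<in>Ins n c. fA (restrict s A) < d \<and> fB (restrict s B) < d \<and>
                    f s mod d = (fA (restrict s A) + fB (restrict s B)) mod d)))"

definition box_dist ::
  "nat \<Rightarrow> nat \<Rightarrow> ((nat \<Rightarrow> nat) \<Rightarrow> nat) \<Rightarrow> (nat \<Rightarrow> nat) \<Rightarrow> (nat \<Rightarrow> nat) \<Rightarrow> real" where
  "box_dist n d f m s =
     (if (\<Sum>j<n. m j) mod d = f s mod d then 1 / real d ^ (n - 1) else 0)"

end

theory Submission
  imports Defs "HOL-Number_Theory.Cong"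
begin

text \<open>
  Since a weighted sum
  is equidistributed modulo \<open>d\<close> as soon as one weight is a unit and its coordinate is free, every
  residue class has \<open>d\<^sup>n\<^sup>-\<^sup>1\<close> elements and every proper marginal of the box is independent of \<open>s\<close>.

  If \<open>f = fA + fB\<close> across a bipartition, the product of a box for \<open>fA\<close> on \<open>A\<close> and one for \<open>fB\<close>
  on \<open>B\<close> is another non-signaling distribution supported on the right outcomes.

  Conversely, let \<open>p\<close> be non-signaling and supported on the right outcomes. For weights \<open>w\<close>, the
  distribution of \<open>\<Sum> w\<^sub>j m\<^sub>j mod d\<close> depends only on the inputs of the parties with non-zero
  weight, and shifting all weights by a constant only shifts it by a multiple of \<open>f s\<close>. Hence changing
  the input of party \<open>j\<close> shifts the distribution by \<open>w\<^sub>j\<close> times the change of \<open>f\<close>. Changing the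
  inputs of \<open>j \<in> A\<close> and \<open>k \<in> B\<close> in either order, the distribution turns out periodic with period
  \<open>(w\<^sub>k - w\<^sub>j)\<close> times a mixed second difference of \<open>f\<close>. Grouping parties by their weight modulo the
  prime \<open>d\<close>, a function that is not bipartite linear has a non-vanishing mixed difference across the
  grouping, so the period is a unit and the distribution is uniform. Uniform residue distributions
  for all non-constant weight vectors determine \<open>p\<close> by double counting.
\<close>

lemma periodic_int_multiples:
  fixes h :: "int \<Rightarrow> 'a"
  assumes "\<And>z. h (z + u) = h z"
  shows "h (z + k * u) = h z"
proof (induction k rule: int_induct[where k = 0])
  case (step1 i)
  then show ?case using assms[of "z + i * u"] by (simp add: algebra_simps)
next
  case (step2 i)
  then show ?case using assms[of "z + (i - 1) * u"] by (simp add: algebra_simps)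
qed simp

lemma periodic_coprime_imp_constant:
  fixes h :: "int \<Rightarrow> 'a"
  assumes per_m: "\<And>z. h (z mod m) = h z" and per_u: "\<And>z. h (z + u) = h z"
    and "coprime u m"
  shows "h z = h 0"
proof -
  obtain a b where ab: "a * u + b * m = 1"
    using bezout_int[of u m] \<open>coprime u m\<close> by auto
  have "h (z + b * m) = h z" for z
    by (rule periodic_int_multiples) (metis per_m mod_add_self2)
  then have step: "h (z + 1) = h z" for z
    using periodic_int_multiples[of h u, OF per_u] ab by (metis add.assoc)
  show ?thesis
    using periodic_int_multiples[of h 1 0 z, OF step] by simp
qed

lemma PiE_fun_upd_induct:
  assumes "finite I" and s: "s \<in> PiE I A" and s': "s' \<in> PiE I A"
    and agree: "\<forall>i\<in>I - K. s i = s' i" and "P s"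
    and step: "\<And>u k v. u \<in> PiE I A \<Longrightarrow> k \<in> I \<inter> K \<Longrightarrow> v \<in> A k \<Longrightarrow> P u \<Longrightarrow> P (u(k := v))"
  shows "P s'"
proof -
  have "\<forall>u\<in>PiE I A. {i\<in>I. u i \<noteq> s' i} = D \<longrightarrow> P u \<longrightarrow> P s'"
    if "finite D" "D \<subseteq> I \<inter> K" for D
    using that
  proof (induction D rule: finite_induct)
    case empty
    show ?case
    proof (intro ballI impI)
      fix u assume "u \<in> PiE I A" "{i\<in>I. u i \<noteq> s' i} = {}" "P u"
      then have "u = s'" using s' by (intro PiE_ext) blast+
      with \<open>P u\<close> show "P s'" by simp
    qed
  next
    case (insert x D)
    show ?case
    proof (intro ballI impI)
      fix u assume u: "u \<in> PiE I A" and diff: "{i\<in>I. u i \<noteq> s' i} = insert x D" and "P u"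
      have x: "x \<in> I \<inter> K" "s' x \<in> A x" using insert.prems s' by auto
      have "u(x := s' x) \<in> PiE I A" using PiE_fun_upd[OF x(2) u] x by (simp add: insert_absorb)
      moreover have "{i\<in>I. (u(x := s' x)) i \<noteq> s' i} = D" using diff insert.hyps(2) by auto
      moreover have "P (u(x := s' x))" using step[OF u x \<open>P u\<close>] .
      ultimately show "P s'" using insert.IH insert.prems by blast
    qed
  qed
  moreover have "finite {i\<in>I. s i \<noteq> s' i}" using \<open>finite I\<close> by simp
  moreover have "{i\<in>I. s i \<noteq> s' i} \<subseteq> I \<inter> K" using agree by blast
  ultimately show ?thesis using s \<open>P s\<close> by blast
qed

lemma Ins_fun_upd_induct:
  assumes "s \<in> Ins n c" "s' \<in> Ins n c" "\<forall>i\<in>{..<n} - K. s i = s' i" "P s"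
    and "\<And>u k v. u \<in> Ins n c \<Longrightarrow> k \<in> K \<Longrightarrow> k < n \<Longrightarrow> v < c k \<Longrightarrow> P u \<Longrightarrow> P (u(k := v))"
  shows "P s'"
proof (rule PiE_fun_upd_induct[where P=P, OF finite_lessThan assms(1-4)[unfolded Ins_def]])
  fix u k v assume "u \<in> PiE {..<n} (\<lambda>j. {..<c j})" "k \<in> {..<n} \<inter> K" "v \<in> {..<c k}" "P u"
  then show "P (u(k := v))" using assms(5)[of u k v] unfolding Ins_def by blast
qed

lemma Ins_fun_upd: "s \<in> Ins n c \<Longrightarrow> j < n \<Longrightarrow> v < c j \<Longrightarrow> s(j := v) \<in> Ins n c"
  unfolding Ins_def by (auto simp: PiE_iff extensional_def)

lemma Ins_nonempty: "\<forall>j<n. c j > 0 \<Longrightarrow> restrict (\<lambda>_. 0) {..<n} \<in> Ins n c"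
  unfolding Ins_def by auto

lemma Ins_restrict: "s \<in> Ins n c \<Longrightarrow> restrict s {..<n} = s"
  unfolding Ins_def by (rule PiE_restrict)

lemma restrict_fun_upd_notin: "j \<notin> S \<Longrightarrow> restrict (t(j := v)) S = restrict t S"
  by (auto simp: restrict_def)

lemma restrict_eq_subset: "restrict s S = restrict s' S \<Longrightarrow> A \<subseteq> S \<Longrightarrow> restrict s A = restrict s' A"
  by (metis restrict_restrict inf.absorb_iff2)

lemma Outs_fun_upd: "t \<in> Outs n d \<Longrightarrow> j < n \<Longrightarrow> v < d \<Longrightarrow> t(j := v) \<in> Outs n d"
  unfolding Outs_def by (auto simp: PiE_iff extensional_def)

lemma Outs_less: "t \<in> Outs n d \<Longrightarrow> j < n \<Longrightarrow> t j < d"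
  unfolding Outs_def by (auto simp: PiE_iff)

lemma finite_Outs: "finite (Outs n d)"
  unfolding Outs_def by (auto intro: finite_PiE)

lemma card_Outs: "card (Outs n d) = d ^ n"
  unfolding Outs_def by (simp add: card_PiE)

lemma Outs_neq_imp_less:
  assumes "m \<in> Outs n d" "m0 \<in> Outs n d" "m \<noteq> m0"
  obtains j where "j < n" "m j \<noteq> m0 j"
proof -
  have "\<exists>j<n. m j \<noteq> m0 j"
  proof (rule ccontr)
    assume "\<not> (\<exists>j<n. m j \<noteq> m0 j)"
    then have "m = m0" using assms(1,2) unfolding Outs_def by (intro PiE_ext) auto
    with assms(3) show False ..
  qed
  then show ?thesis using that by blast
qed

lemma card_Outs_constant:
  assumes "n > 0"
  shows "card {t\<in>Outs n d. \<forall>j<n. \<forall>k<n. t j = t k} = d"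
proof -
  have "{t\<in>Outs n d. \<forall>j<n. \<forall>k<n. t j = t k} = (\<lambda>a. restrict (\<lambda>_. a) {..<n}) ` {..<d}"
  proof (intro equalityI subsetI)
    fix t assume "t \<in> {t\<in>Outs n d. \<forall>j<n. \<forall>k<n. t j = t k}"
    then have t: "t \<in> Outs n d" and const: "\<And>i. i < n \<Longrightarrow> t i = t 0" using assms by blast+
    have "t 0 < d" using Outs_less[OF t assms] .
    then have r: "restrict (\<lambda>_. t 0) {..<n} \<in> Outs n d" by (simp add: Outs_def)
    have "t = restrict (\<lambda>_. t 0) {..<n}"
      by (rule PiE_ext[OF t[unfolded Outs_def] r[unfolded Outs_def]]) (metis const lessThan_iff restrict_apply')
    with \<open>t 0 < d\<close> show "t \<in> (\<lambda>a. restrict (\<lambda>_. a) {..<n}) ` {..<d}" by blast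
  next
    fix t assume "t \<in> (\<lambda>a. restrict (\<lambda>_. a) {..<n}) ` {..<d}"
    then obtain a where "a < d" "t = restrict (\<lambda>_. a) {..<n}" by blast
    then show "t \<in> {t\<in>Outs n d. \<forall>j<n. \<forall>k<n. t j = t k}" by (simp add: Outs_def)
  qed
  moreover have "inj_on (\<lambda>a. restrict (\<lambda>_. a) {..<n}) {..<d}"
  proof (rule inj_onI)
    fix a b :: nat assume "restrict (\<lambda>_. a) {..<n} = restrict (\<lambda>_. b) {..<n}"
    from fun_cong[OF this, of 0] show "a = b" using assms by simp
  qed
  ultimately show ?thesis by (simp add: card_image)
qed

lemma card_Outs_nonconstant:
  assumes "n > 0"
  shows "card {t\<in>Outs n d. \<exists>j<n. \<exists>k<n. t j \<noteq> t k} = d ^ n - d"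
proof -
  have "{t\<in>Outs n d. \<exists>j<n. \<exists>k<n. t j \<noteq> t k} = Outs n d - {t\<in>Outs n d. \<forall>j<n. \<forall>k<n. t j = t k}"
    by auto
  then show ?thesis using assms by (simp add: card_Diff_subset finite_Outs card_Outs card_Outs_constant)
qed

lemma sum_if_const: "finite A \<Longrightarrow> (\<Sum>x\<in>A. if P x then K else 0) = of_nat (card {x\<in>A. P x}) * K"
  by (simp add: sum.If_cases Int_def)

lemma marginal_if_const:
  "marginal n d (\<lambda>m s. if P m s then K else 0) S s mS = card {m\<in>Outs n d. restrict m S = mS \<and> P m s} * (K :: real)"
  unfolding marginal_def by (simp add: sum_if_const finite_Outs)

lemma sum_partition:
  fixes n :: nat
  assumes "A \<inter> B = {}" "A \<union> B = {..<n}"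
  shows "(\<Sum>j<n. m j) = (\<Sum>j\<in>A. m j) + (\<Sum>j\<in>B. m j)"
proof -
  have "finite (A \<union> B)" using assms(2) by simp
  then have "finite A" "finite B" by auto
  then show ?thesis using sum.union_disjoint[of A B m] assms by simp
qed

section \<open>Equidistribution of weighted sums\<close>

definition wsum :: "nat \<Rightarrow> (nat \<Rightarrow> int) \<Rightarrow> (nat \<Rightarrow> nat) \<Rightarrow> int" where
  "wsum n w m = (\<Sum>j<n. w j * int (m j))"

lemma wsum_fun_upd:
  assumes "j < n"
  shows "wsum n w (t(j := v)) = wsum n w t + w j * (int v - int (t j))"
proof -
  have "wsum n w (t(j := v)) = w j * int v + (\<Sum>i\<in>{..<n} - {j}. w i * int (t i))"
    unfolding wsum_def using assms by (subst sum.remove[of _ j]) auto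
  moreover have "wsum n w t = w j * int (t j) + (\<Sum>i\<in>{..<n} - {j}. w i * int (t i))"
    unfolding wsum_def using assms by (subst sum.remove[of _ j]) auto
  ultimately show ?thesis by (simp add: algebra_simps)
qed

lemma wsum_of_bool: "A \<subseteq> {..<n} \<Longrightarrow> wsum n (\<lambda>j. of_bool (j \<in> A)) m = int (\<Sum>j\<in>A. m j)"
  unfolding wsum_def by (simp add: sum.If_cases Int_absorb1)

definition cycle :: "nat \<Rightarrow> nat \<Rightarrow> (nat \<Rightarrow> nat) \<Rightarrow> nat \<Rightarrow> nat" where
  "cycle d j t = t(j := (t j + 1) mod d)"

lemma cycle_Outs: "d > 0 \<Longrightarrow> j < n \<Longrightarrow> t \<in> Outs n d \<Longrightarrow> cycle d j t \<in> Outs n d"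
  unfolding cycle_def by (intro Outs_fun_upd) auto

lemma inj_on_cycle:
  assumes "j < n"
  shows "inj_on (cycle d j) (Outs n d)"
proof (rule inj_onI)
  fix t t' assume t: "t \<in> Outs n d" "t' \<in> Outs n d" and eq: "cycle d j t = cycle d j t'"
  have "[t j + 1 = t' j + 1] (mod d)" using fun_cong[OF eq, of j] by (simp add: cycle_def cong_def)
  then have "[t j = t' j] (mod d)" by (simp only: cong_add_rcancel_nat)
  then have "t j = t' j"
    using Outs_less[OF t(1) assms] Outs_less[OF t(2) assms] by (intro cong_less_imp_eq_nat) auto
  then show "t = t'" using eq by (metis cycle_def fun_upd_triv fun_upd_upd)
qed

lemma wsum_cycle:
  assumes "j < n"
  shows "[wsum n w (cycle d j t) = wsum n w t + w j] (mod int d)"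
proof -
  have "[int ((t j + 1) mod d) - int (t j) = (int (t j) + 1) - int (t j)] (mod int d)"
    by (intro cong_diff cong_refl) (simp add: cong_def of_nat_mod add.commute)
  then have "[int ((t j + 1) mod d) - int (t j) = 1] (mod int d)" by simp
  then have "[wsum n w t + w j * (int ((t j + 1) mod d) - int (t j)) = wsum n w t + w j * 1] (mod int d)"
    by (intro cong_add cong_refl cong_scalar_left)
  then show ?thesis unfolding cycle_def wsum_fun_upd[OF assms] by simp
qed

text \<open>Cycling the outcome of party \<open>j\<close> permutes the outcome strings and shifts every weighted sum
  by \<open>w j\<close>.\<close>

lemma card_Outs_wsum_cong_shift:
  assumes "d > 0" and j: "j < n" and Q: "\<And>t v. Q (t(j := v)) = Q t"
  shows "card {t\<in>Outs n d. Q t \<and> [wsum n w t = z + w j] (mod int d)}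
       = card {t\<in>Outs n d. Q t \<and> [wsum n w t = z] (mod int d)}"
proof -
  define X where "X = {t\<in>Outs n d. Q t}"
  have inj: "inj_on (cycle d j) X" using inj_on_cycle[OF j] by (rule inj_on_subset) (auto simp: X_def)
  moreover have "cycle d j ` X \<subseteq> X"
  proof
    fix t assume "t \<in> cycle d j ` X"
    then obtain t' where "t' \<in> X" "t = cycle d j t'" by blast
    then show "t \<in> X" using cycle_Outs[OF \<open>d > 0\<close> j] Q by (simp add: X_def cycle_def)
  qed
  ultimately have surj: "cycle d j ` X = X" by (intro endo_inj_surj) (simp_all add: X_def finite_Outs)
  have "{t\<in>X. [wsum n w t = z + w j] (mod int d)} = cycle d j ` {t\<in>X. [wsum n w t = z] (mod int d)}"
  proof (intro equalityI subsetI)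
    fix t assume t: "t \<in> {t\<in>X. [wsum n w t = z + w j] (mod int d)}"
    then obtain t' where "t' \<in> X" "t = cycle d j t'" using surj by blast
    moreover have "[wsum n w t' + w j = z + w j] (mod int d)"
      using t wsum_cycle[OF j, of w d t'] \<open>t = cycle d j t'\<close> by (metis (mono_tags) cong_sym cong_trans mem_Collect_eq)
    ultimately show "t \<in> cycle d j ` {t\<in>X. [wsum n w t = z] (mod int d)}"
      by (auto simp: cong_add_rcancel)
  next
    fix t assume "t \<in> cycle d j ` {t\<in>X. [wsum n w t = z] (mod int d)}"
    then obtain t' where t': "t' \<in> X" "[wsum n w t' = z] (mod int d)" and "t = cycle d j t'" by blast
    then have "[wsum n w t = z + w j] (mod int d)"
      using wsum_cycle[OF j, of w d t'] by (metis cong_add_rcancel cong_trans)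
    then show "t \<in> {t\<in>X. [wsum n w t = z + w j] (mod int d)}" using surj t' \<open>t = cycle d j t'\<close> by blast
  qed
  moreover have "inj_on (cycle d j) {t\<in>X. [wsum n w t = z] (mod int d)}"
    using inj by (rule inj_on_subset) auto
  ultimately show ?thesis unfolding X_def by (simp add: card_image)
qed

lemma card_Outs_wsum_cong:
  assumes "d > 0" and j: "j < n" and unit: "coprime (w j) (int d)" and Q: "\<And>t v. Q (t(j := v)) = Q t"
  shows "d * card {t\<in>Outs n d. Q t \<and> [wsum n w t = z] (mod int d)} = card {t\<in>Outs n d. Q t}"
proof -
  define N where "N z = card {t\<in>Outs n d. Q t \<and> [wsum n w t = z] (mod int d)}" for z
  have "N (z mod int d) = N z" for z by (simp add: N_def)
  moreover have "N (z + w j) = N z" for z unfolding N_def by (rule card_Outs_wsum_cong_shift[where Q=Q, OF assms(1) j Q])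
  ultimately have N_const: "N z = N 0" for z by (rule periodic_coprime_imp_constant[OF _ _ unit])
  have "card {t\<in>Outs n d. Q t} = (\<Sum>r\<in>{0..<int d}. card {t\<in>Outs n d. Q t \<and> wsum n w t mod int d = r})"
    using sum.group[of "{t\<in>Outs n d. Q t}" "{0..<int d}" "\<lambda>t. wsum n w t mod int d" "\<lambda>_. 1::nat"]
      \<open>d > 0\<close> by (simp add: finite_Outs image_subset_iff)
  also have "\<dots> = (\<Sum>r\<in>{0..<int d}. N r)"
    by (intro sum.cong) (auto simp: N_def cong_def)
  also have "\<dots> = (\<Sum>r\<in>{0..<int d}. N z)" by (metis N_const)
  also have "\<dots> = d * N z" by simp
  finally show ?thesis unfolding N_def ..
qed

lemma card_Outs_sum_mod:
  assumes "d > 0" and A: "A \<subseteq> {..<n}" "a \<in> A" and Q: "\<And>t v. Q (t(a := v)) = Q t"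
  shows "d * card {t\<in>Outs n d. Q t \<and> (\<Sum>j\<in>A. t j) mod d = r mod d} = card {t\<in>Outs n d. Q t}"
proof -
  have "(\<Sum>j\<in>A. t j) mod d = r mod d \<longleftrightarrow> [wsum n (\<lambda>j. of_bool (j \<in> A)) t = int r] (mod int d)" for t
    by (simp only: wsum_of_bool[OF A(1)] cong_def of_nat_mod[symmetric] of_nat_eq_iff)
  moreover have "d * card {t\<in>Outs n d. Q t \<and> [wsum n (\<lambda>j. of_bool (j \<in> A)) t = int r] (mod int d)}
      = card {t\<in>Outs n d. Q t}"
    using A by (intro card_Outs_wsum_cong[where Q=Q, OF \<open>d > 0\<close> _ _ Q]) auto
  ultimately show ?thesis by simp
qed

lemma card_Outs_sum_mod_all:
  assumes "n > 0" "d > 0"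
  shows "card {m\<in>Outs n d. (\<Sum>j<n. m j) mod d = r mod d} = d ^ (n - 1)"
proof -
  have "d * card {m\<in>Outs n d. True \<and> (\<Sum>j<n. m j) mod d = r mod d} = d ^ n"
    using card_Outs_sum_mod[of d "{..<n}" n 0 "\<lambda>_. True" r] assms by (simp add: card_Outs)
  moreover have "d ^ n = d * d ^ (n - 1)" using power_minus_mult[OF \<open>n > 0\<close>, of d] by (simp add: mult.commute)
  ultimately show ?thesis using \<open>d > 0\<close> by simp
qed

lemma card_Outs_two_sums_mod:
  assumes "d > 0" "A \<inter> B = {}" "A \<union> B = {..<n}" "a \<in> A" and Q: "\<And>t v. Q (t(a := v)) = Q t"
  shows "d * card {m\<in>Outs n d. Q m \<and> (\<Sum>j\<in>A. m j) mod d = \<alpha> mod d \<and> (\<Sum>j\<in>B. m j) mod d = \<beta> mod d}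
       = card {m\<in>Outs n d. Q m \<and> (\<Sum>j\<in>B. m j) mod d = \<beta> mod d}"
proof -
  have "a \<notin> B" using assms by auto
  then have sum_B: "(\<Sum>j\<in>B. (t(a := v)) j) = (\<Sum>j\<in>B. t j)" for t :: "nat \<Rightarrow> nat" and v by (intro sum.cong) auto
  have "d * card {m\<in>Outs n d. (Q m \<and> (\<Sum>j\<in>B. m j) mod d = \<beta> mod d) \<and> (\<Sum>j\<in>A. m j) mod d = \<alpha> mod d}
       = card {m\<in>Outs n d. Q m \<and> (\<Sum>j\<in>B. m j) mod d = \<beta> mod d}"
    using assms by (intro card_Outs_sum_mod[OF \<open>d > 0\<close> _ \<open>a \<in> A\<close>]) (auto simp: sum_B simp del: fun_upd_apply)
  then show ?thesis by (simp add: conj_commute conj_left_commute)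
qed

lemma card_Outs_two_sums_mod_restrict_cong:
  assumes "d > 0" "A \<inter> B = {}" "A \<union> B = {..<n}" and agree: "restrict s S = restrict s' S"
  shows "card {m\<in>Outs n d. restrict m S = mS \<and> (\<Sum>j\<in>A. m j) mod d = fA (restrict s A) mod d
                \<and> (\<Sum>j\<in>B. m j) mod d = \<beta> mod d}
       = card {m\<in>Outs n d. restrict m S = mS \<and> (\<Sum>j\<in>A. m j) mod d = fA (restrict s' A) mod d
                \<and> (\<Sum>j\<in>B. m j) mod d = \<beta> mod d}"
proof (cases "A \<subseteq> S")
  case True
  then show ?thesis using restrict_eq_subset[OF agree] by simp
next
  case False
  then obtain a where "a \<in> A" "a \<notin> S" by blast
  then have "d * card {m\<in>Outs n d. restrict m S = mS \<and> (\<Sum>j\<in>A. m j) mod d = r mod d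
                \<and> (\<Sum>j\<in>B. m j) mod d = \<beta> mod d}
      = card {m\<in>Outs n d. restrict m S = mS \<and> (\<Sum>j\<in>B. m j) mod d = \<beta> mod d}" for r
    using assms by (intro card_Outs_two_sums_mod[OF _ _ _ \<open>a \<in> A\<close>]) (auto simp: restrict_fun_upd_notin)
  from trans[OF this[of "fA (restrict s A)"] this[of "fA (restrict s' A)", symmetric]]
  show ?thesis using \<open>d > 0\<close> by simp
qed

lemma card_Outs_wsum_cong_prime:
  assumes "prime d" "j < n" "\<not> int d dvd w j"
  shows "card {t\<in>Outs n d. [wsum n w t = z] (mod int d)} = d ^ (n - 1)"
proof -
  have "d > 0" using \<open>prime d\<close> prime_gt_0_nat by blast
  have "prime (int d)" using \<open>prime d\<close> by simp
  then have "coprime (w j) (int d)" using assms(3) prime_imp_coprime coprime_commute by blast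
  then have "d * card {t\<in>Outs n d. True \<and> [wsum n w t = z] (mod int d)} = card {t\<in>Outs n d. True}"
    by (intro card_Outs_wsum_cong[OF \<open>d > 0\<close> \<open>j < n\<close>]) auto
  then have "d * card {t\<in>Outs n d. [wsum n w t = z] (mod int d)} = d ^ n" by (simp add: card_Outs)
  also have "\<dots> = d * d ^ (n - 1)" using power_minus_mult[of n d] \<open>j < n\<close> by (simp add: mult.commute)
  finally show ?thesis by (rule nat_mult_eq_cancel1[OF \<open>d > 0\<close>, THEN iffD1])
qed

lemma wsum_constant: "(\<And>i. i < n \<Longrightarrow> t i = a) \<Longrightarrow> wsum n w t = int a * (\<Sum>i<n. w i)"
  unfolding wsum_def sum_distrib_left by (intro sum.cong refl) (simp add: mult.commute)

text \<open>The difference \<open>v = m - m0\<close> is a non-zero vector whose coordinates sum to \<open>0\<close> modulo \<open>d\<close>: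
  the strings \<open>t\<close> with \<open>t \<cdot> v = 0\<close> form a hyperplane of \<open>d\<^sup>n\<^sup>-\<^sup>1\<close> elements containing
  all \<open>d\<close> constant strings.\<close>

lemma card_nonconstant_wsum_agree:
  assumes "prime d" and m: "m \<in> Outs n d" and m0: "m0 \<in> Outs n d" and "m \<noteq> m0"
    and sums: "[(\<Sum>j<n. m j) = (\<Sum>j<n. m0 j)] (mod d)"
  shows "card {t\<in>Outs n d. (\<exists>j<n. \<exists>k<n. t j \<noteq> t k)
      \<and> [wsum n (\<lambda>i. int (t i)) m = wsum n (\<lambda>i. int (t i)) m0] (mod int d)} = d ^ (n - 1) - d"
proof -
  obtain j where j: "j < n" "m j \<noteq> m0 j" using Outs_neq_imp_less[OF m m0 \<open>m \<noteq> m0\<close>] .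
  define v where "v i = int (m i) - int (m0 i)" for i
  define X where "X = {t\<in>Outs n d. [wsum n v t = 0] (mod int d)}"
  define C where "C = {t\<in>Outs n d. \<forall>j<n. \<forall>k<n. t j = t k}"
  have agree_iff: "[wsum n (\<lambda>i. int (t i)) m = wsum n (\<lambda>i. int (t i)) m0] (mod int d)
      \<longleftrightarrow> [wsum n v t = 0] (mod int d)" for t
  proof -
    have "wsum n (\<lambda>i. int (t i)) m - wsum n (\<lambda>i. int (t i)) m0 = wsum n v t"
      by (simp add: wsum_def v_def sum_subtractf[symmetric] algebra_simps)
    then show ?thesis by (simp add: cong_iff_dvd_diff cong_0_iff)
  qed
  have "v j \<noteq> 0" "\<bar>v j\<bar> < int d"
    using j Outs_less[OF m j(1)] Outs_less[OF m0 j(1)] by (auto simp: v_def)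
  then have "\<not> int d dvd v j" using dvd_imp_le_int[of "v j" "int d"] by linarith
  then have card_X: "card X = d ^ (n - 1)"
    unfolding X_def using card_Outs_wsum_cong_prime[OF \<open>prime d\<close> j(1)] by blast
  have "[(\<Sum>i<n. v i) = 0] (mod int d)"
    using sums by (simp add: v_def sum_subtractf cong_diff_iff_cong_0 flip: of_nat_sum cong_int_iff)
  have "C \<subseteq> X"
  proof
    fix t assume "t \<in> C"
    then have t: "t \<in> Outs n d" "\<And>i. i < n \<Longrightarrow> t i = t j" using j(1) unfolding C_def by blast+
    have "[int (t j) * (\<Sum>i<n. v i) = int (t j) * 0] (mod int d)"
      using \<open>[(\<Sum>i<n. v i) = 0] (mod int d)\<close> by (rule cong_scalar_left)
    then show "t \<in> X" using t(1) by (simp add: X_def wsum_constant[OF t(2)])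
  qed
  have "{t\<in>Outs n d. (\<exists>j<n. \<exists>k<n. t j \<noteq> t k)
      \<and> [wsum n (\<lambda>i. int (t i)) m = wsum n (\<lambda>i. int (t i)) m0] (mod int d)} = X - C"
    by (auto simp: agree_iff X_def C_def)
  moreover have "card C = d" unfolding C_def using j(1) by (intro card_Outs_constant) simp
  moreover have "finite C" by (simp add: C_def finite_Outs)
  ultimately show ?thesis using \<open>C \<subseteq> X\<close> card_X by (simp add: card_Diff_subset)
qed

section \<open>The box distribution\<close>

lemma box_dist_eq:
  "box_dist n d f = (\<lambda>m s. if (\<Sum>j<n. m j) mod d = f s mod d then 1 / real d ^ (n - 1) else 0)"
  by (simp add: fun_eq_iff box_dist_def)

lemma box_dist_is_cond_dist:
  assumes "n > 0" "d > 0"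
  shows "is_cond_dist n d c (box_dist n d f)"
  unfolding is_cond_dist_def box_dist_eq
  using assms by (simp add: sum_if_const finite_Outs card_Outs_sum_mod_all)

lemma box_dist_prob_sum_eq:
  assumes "n > 0" "d > 0"
  shows "prob_sum_eq n d f (box_dist n d f) s = 1"
  unfolding prob_sum_eq_def box_dist_def using assms by (simp add: card_Outs_sum_mod_all)

lemma box_dist_non_signaling:
  assumes "d > 0"
  shows "non_signaling n d c (box_dist n d f)"
  unfolding non_signaling_def
proof (intro allI impI ballI)
  fix S s s' mS
  assume S: "S \<subseteq> {..<n}" and s: "s \<in> Ins n c" and s': "s' \<in> Ins n c"
    and agree: "restrict s S = restrict s' S"
  show "marginal n d (box_dist n d f) S s mS = marginal n d (box_dist n d f) S s' mS"
  proof (cases "S = {..<n}")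
    case True
    then show ?thesis using agree Ins_restrict[OF s] Ins_restrict[OF s'] by simp
  next
    case False
    then obtain j where j: "j < n" "j \<notin> S" using S by blast
    have "d * card {m\<in>Outs n d. restrict m S = mS \<and> (\<Sum>i<n. m i) mod d = r mod d}
        = card {m\<in>Outs n d. restrict m S = mS}" for r
      using card_Outs_sum_mod[OF assms, where A="{..<n}" and a=j and Q="\<lambda>m. restrict m S = mS" and r=r] j
      by (simp add: restrict_fun_upd_notin)
    from trans[OF this[of "f s"] this[of "f s'", symmetric]]
    have "card {m\<in>Outs n d. restrict m S = mS \<and> (\<Sum>i<n. m i) mod d = f s mod d}
        = card {m\<in>Outs n d. restrict m S = mS \<and> (\<Sum>i<n. m i) mod d = f s' mod d}"
      using assms by simp
    then show ?thesis unfolding box_dist_eq marginal_if_const by simp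
  qed
qed

section \<open>Bipartite linear functions admit a second distribution\<close>

definition split_box_dist ::
  "nat \<Rightarrow> nat \<Rightarrow> nat set \<Rightarrow> nat set \<Rightarrow> ((nat \<Rightarrow> nat) \<Rightarrow> nat) \<Rightarrow> ((nat \<Rightarrow> nat) \<Rightarrow> nat)
     \<Rightarrow> (nat \<Rightarrow> nat) \<Rightarrow> (nat \<Rightarrow> nat) \<Rightarrow> real" where
  "split_box_dist n d A B fA fB = (\<lambda>m s.
     if (\<Sum>j\<in>A. m j) mod d = fA (restrict s A) mod d \<and> (\<Sum>j\<in>B. m j) mod d = fB (restrict s B) mod d
     then 1 / real d ^ (n - 2) else 0)"

context
  fixes n d :: nat and A B :: "nat set"
  assumes partition: "A \<inter> B = {}" "A \<union> B = {..<n}" "A \<noteq> {}" "B \<noteq> {}"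
    and d_pos: "d > 0"
begin

lemma partition_two_le: "n \<ge> 2"
proof -
  obtain a b where "a \<in> A" "b \<in> B" using partition by blast
  then have "a < n" "b < n" "a \<noteq> b" using partition by auto
  then show ?thesis by linarith
qed

lemma card_Outs_two_sums_mod_all:
  "card {m\<in>Outs n d. (\<Sum>j\<in>A. m j) mod d = \<alpha> mod d \<and> (\<Sum>j\<in>B. m j) mod d = \<beta> mod d} = d ^ (n - 2)"
proof -
  obtain a b where "a \<in> A" "b \<in> B" using partition by blast
  have "B \<subseteq> {..<n}" using partition by auto
  have "d * card {m\<in>Outs n d. True \<and> (\<Sum>j\<in>A. m j) mod d = \<alpha> mod d \<and> (\<Sum>j\<in>B. m j) mod d = \<beta> mod d}
      = card {m\<in>Outs n d. True \<and> (\<Sum>j\<in>B. m j) mod d = \<beta> mod d}"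
    using partition d_pos \<open>a \<in> A\<close> by (intro card_Outs_two_sums_mod) auto
  moreover have "d * card {m\<in>Outs n d. True \<and> (\<Sum>j\<in>B. m j) mod d = \<beta> mod d} = d ^ n"
    using card_Outs_sum_mod[OF d_pos \<open>B \<subseteq> {..<n}\<close> \<open>b \<in> B\<close>, where Q="\<lambda>_. True"]
    by (simp add: card_Outs)
  moreover have "n = Suc (Suc (n - 2))" using partition_two_le by simp
  then have "d ^ n = d * (d * d ^ (n - 2))" by (metis power_Suc)
  ultimately show ?thesis using d_pos by simp
qed

lemma split_box_dist_is_cond_dist: "is_cond_dist n d c (split_box_dist n d A B fA fB)"
  unfolding is_cond_dist_def split_box_dist_def sum_if_const[OF finite_Outs] card_Outs_two_sums_mod_all
  using d_pos by simp

lemma split_box_dist_non_signaling: "non_signaling n d c (split_box_dist n d A B fA fB)"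
  unfolding non_signaling_def
proof (intro allI impI ballI)
  fix S s s' mS
  assume "S \<subseteq> {..<n}" and "s \<in> Ins n c" "s' \<in> Ins n c" and agree: "restrict s S = restrict s' S"
  define M where "M \<alpha> \<beta> = card {m\<in>Outs n d. restrict m S = mS \<and> (\<Sum>j\<in>A. m j) mod d = \<alpha> mod d
                \<and> (\<Sum>j\<in>B. m j) mod d = \<beta> mod d}" for \<alpha> \<beta>
  have "M (fA (restrict s A)) (fB (restrict s B)) = M (fA (restrict s' A)) (fB (restrict s B))"
    unfolding M_def by (rule card_Outs_two_sums_mod_restrict_cong[OF d_pos partition(1,2) agree])
  also have "\<dots> = M (fA (restrict s' A)) (fB (restrict s' B))"
  proof -
    have "M \<alpha> \<beta> = card {m\<in>Outs n d. restrict m S = mS \<and> (\<Sum>j\<in>B. m j) mod d = \<beta> mod d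
                \<and> (\<Sum>j\<in>A. m j) mod d = \<alpha> mod d}" for \<alpha> \<beta>
      unfolding M_def by (intro arg_cong[where f=card]) blast
    then show ?thesis
      using card_Outs_two_sums_mod_restrict_cong[where A=B and B=A and fA=fB and \<beta>="fA (restrict s' A)",
          OF d_pos _ _ agree] partition by (simp add: Int_commute Un_commute)
  qed
  finally show "marginal n d (split_box_dist n d A B fA fB) S s mS
      = marginal n d (split_box_dist n d A B fA fB) S s' mS"
    unfolding split_box_dist_def marginal_if_const M_def by simp
qed

lemma split_box_dist_support:
  assumes "split_box_dist n d A B fA fB m s \<noteq> 0"
  shows "(\<Sum>j<n. m j) mod d = (fA (restrict s A) + fB (restrict s B)) mod d"
  using assms unfolding split_box_dist_def sum_partition[OF partition(1,2)]
  by (metis mod_add_eq)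

lemma split_box_dist_prob_sum_eq:
  assumes "s \<in> Ins n c" and f: "f s mod d = (fA (restrict s A) + fB (restrict s B)) mod d"
  shows "prob_sum_eq n d f (split_box_dist n d A B fA fB) s = 1"
proof -
  have "prob_sum_eq n d f (split_box_dist n d A B fA fB) s = (\<Sum>m\<in>Outs n d. split_box_dist n d A B fA fB m s)"
    unfolding prob_sum_eq_def
    by (rule sum.mono_neutral_left) (use split_box_dist_support f in \<open>auto simp: finite_Outs\<close>)
  also have "\<dots> = 1"
    using split_box_dist_is_cond_dist \<open>s \<in> Ins n c\<close> unfolding is_cond_dist_def by blast
  finally show ?thesis .
qed

lemma split_box_dist_neq_box_dist:
  assumes "d \<ge> 2" and f: "f s mod d = (fA (restrict s A) + fB (restrict s B)) mod d"
  shows "\<exists>m\<in>Outs n d. split_box_dist n d A B fA fB m s \<noteq> box_dist n d f m s"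
proof -
  have "{m\<in>Outs n d. (\<Sum>j\<in>A. m j) mod d = fA (restrict s A) mod d
      \<and> (\<Sum>j\<in>B. m j) mod d = fB (restrict s B) mod d} \<noteq> {}"
    using card_Outs_two_sums_mod_all[of "fA (restrict s A)" "fB (restrict s B)"] d_pos by (intro notI) simp
  then obtain m where m: "m \<in> Outs n d" "(\<Sum>j\<in>A. m j) mod d = fA (restrict s A) mod d"
      "(\<Sum>j\<in>B. m j) mod d = fB (restrict s B) mod d"
    by blast
  then have split: "split_box_dist n d A B fA fB m s = 1 / real d ^ (n - 2)"
    by (simp add: split_box_dist_def)
  then have "box_dist n d f m s = 1 / real d ^ (n - 1)"
    using split_box_dist_support[of fA fB m s] f d_pos by (simp add: box_dist_def)
  moreover have "real d ^ (n - 2) < real d ^ (n - 1)"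
    using \<open>d \<ge> 2\<close> partition_two_le by (intro power_strict_increasing) auto
  ultimately show ?thesis using split m(1) by (metis divide_cancel_left zero_neq_one order_less_irrefl)
qed

end

lemma bipartite_linear_imp_not_unique:
  assumes "d \<ge> 2" and "\<forall>j<n. c j > 0" and "bipartite_linear n d c f"
  shows "\<exists>p. is_cond_dist n d c p \<and> non_signaling n d c p \<and> (\<forall>s\<in>Ins n c. prob_sum_eq n d f p s = 1)
    \<and> (\<exists>s\<in>Ins n c. \<exists>m\<in>Outs n d. p m s \<noteq> box_dist n d f m s)"
proof -
  obtain A B fA fB where partition: "A \<noteq> {}" "B \<noteq> {}" "A \<inter> B = {}" "A \<union> B = {..<n}"
    and f: "\<forall>s\<in>Ins n c. f s mod d = (fA (restrict s A) + fB (restrict s B)) mod d"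
    using assms(3) unfolding bipartite_linear_def by blast
  have "d > 0" using \<open>d \<ge> 2\<close> by simp
  note split = partition(3,4,1,2) \<open>d > 0\<close>
  define s0 where "s0 = restrict (\<lambda>_. 0 :: nat) {..<n}"
  have "s0 \<in> Ins n c" unfolding s0_def using Ins_nonempty assms(2) .
  moreover obtain m where "m \<in> Outs n d" "split_box_dist n d A B fA fB m s0 \<noteq> box_dist n d f m s0"
    using split_box_dist_neq_box_dist[OF split \<open>d \<ge> 2\<close>, where f=f and s=s0] f \<open>s0 \<in> Ins n c\<close> by blast
  moreover have "prob_sum_eq n d f (split_box_dist n d A B fA fB) s = 1" if "s \<in> Ins n c" for s
    using split_box_dist_prob_sum_eq[OF split that] f that by blast
  ultimately show ?thesis
    using split_box_dist_is_cond_dist[OF split] split_box_dist_non_signaling[OF split] by blast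
qed

section \<open>Vanishing mixed differences force bipartite linearity\<close>

definition mixed_diff :: "((nat \<Rightarrow> nat) \<Rightarrow> int) \<Rightarrow> (nat \<Rightarrow> nat) \<Rightarrow> nat \<Rightarrow> nat \<Rightarrow> nat \<Rightarrow> nat \<Rightarrow> int" where
  "mixed_diff F s j v k u = F (s(j := v, k := u)) - F (s(j := v)) - F (s(k := u)) + F s"

definition combine :: "nat set \<Rightarrow> (nat \<Rightarrow> nat) \<Rightarrow> (nat \<Rightarrow> nat) \<Rightarrow> nat \<Rightarrow> nat" where
  "combine A x y = (\<lambda>i. if i \<in> A then x i else y i)"

lemma combine_Ins: "x \<in> Ins n c \<Longrightarrow> y \<in> Ins n c \<Longrightarrow> combine A x y \<in> Ins n c"
  unfolding Ins_def combine_def by (auto simp: PiE_iff extensional_def)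

lemma combine_fun_upd: "j \<in> A \<Longrightarrow> combine A (x(j := v)) y = (combine A x y)(j := v)"
  by (auto simp: combine_def)

lemma combine_same [simp]: "combine A x x = x"
  by (simp add: combine_def)

lemma combine_combine [simp]: "combine A (combine A x y) z = combine A x z"
  by (auto simp: combine_def)

lemma mixed_diff_dvd_imp_increment_invariant:
  fixes F :: "(nat \<Rightarrow> nat) \<Rightarrow> int"
  assumes "A \<inter> B = {}"
    and mixed: "\<And>s j v k u. s \<in> Ins n c \<Longrightarrow> j \<in> A \<Longrightarrow> v < c j \<Longrightarrow> k \<in> B \<Longrightarrow> u < c k \<Longrightarrow>
      q dvd mixed_diff F s j v k u"
    and u: "u \<in> Ins n c" "u' \<in> Ins n c" "\<forall>i\<in>{..<n} - B. u i = u' i" and j: "j \<in> A" "v < c j"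
  shows "q dvd (F (u'(j := v)) - F u') - (F (u(j := v)) - F u)"
proof (rule Ins_fun_upd_induct[OF u, where P="\<lambda>x. q dvd (F (x(j := v)) - F x) - (F (u(j := v)) - F u)"])
  fix x k w assume x: "x \<in> Ins n c" and k: "k \<in> B" and "w < c k"
    and IH: "q dvd (F (x(j := v)) - F x) - (F (u(j := v)) - F u)"
  have "j \<noteq> k" using j k \<open>A \<inter> B = {}\<close> by auto
  then have "(F ((x(k := w))(j := v)) - F (x(k := w))) - (F (u(j := v)) - F u)
      = mixed_diff F x j v k w + ((F (x(j := v)) - F x) - (F (u(j := v)) - F u))"
    by (simp add: mixed_diff_def fun_upd_twist)
  moreover have "q dvd mixed_diff F x j v k w"
    using mixed x k j \<open>w < c k\<close> by auto
  ultimately show "q dvd (F ((x(k := w))(j := v)) - F (x(k := w))) - (F (u(j := v)) - F u)"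
    using IH by (metis dvd_add)
qed simp

text \<open>Moving from \<open>(s0\<^sub>A, s\<^sub>B)\<close> to \<open>s\<close> one coordinate of \<open>A\<close> at a time, each step changes \<open>F\<close>
  modulo \<open>q\<close> as much as the corresponding step from \<open>s0\<close> to \<open>(s\<^sub>A, s0\<^sub>B)\<close>.\<close>

lemma mixed_diff_dvd_imp_additive:
  fixes F :: "(nat \<Rightarrow> nat) \<Rightarrow> int"
  assumes partition: "A \<inter> B = {}" "A \<union> B = {..<n}" and s0: "s0 \<in> Ins n c" and s: "s \<in> Ins n c"
    and mixed: "\<And>s j v k u. s \<in> Ins n c \<Longrightarrow> j \<in> A \<Longrightarrow> v < c j \<Longrightarrow> k \<in> B \<Longrightarrow> u < c k \<Longrightarrow>
      q dvd mixed_diff F s j v k u"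
  shows "q dvd F s + F s0 - F (combine A s s0) - F (combine A s0 s)"
proof -
  let ?P = "\<lambda>z. q dvd (F (combine A z s) - F (combine A s0 s)) - (F (combine A z s0) - F s0)"
  have "combine A s s0 \<in> Ins n c" using combine_Ins s s0 .
  then have "?P (combine A s s0)"
  proof (rule Ins_fun_upd_induct[where K=A and P="?P", OF s0])
    show "\<forall>i\<in>{..<n} - A. s0 i = combine A s s0 i" by (simp add: combine_def)
  next
    fix z j v assume z: "z \<in> Ins n c" and j: "j \<in> A" and "v < c j" and IH: "?P z"
    have "q dvd (F ((combine A z s)(j := v)) - F (combine A z s))
        - (F ((combine A z s0)(j := v)) - F (combine A z s0))"
      using j \<open>v < c j\<close> z s s0 partition
      by (intro mixed_diff_dvd_imp_increment_invariant[OF partition(1) mixed] combine_Ins)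
        (auto simp: combine_def)
    from dvd_add[OF this IH] show "?P (z(j := v))"
      using j by (simp add: combine_fun_upd algebra_simps)
  qed simp
  then show ?thesis by (simp add: algebra_simps)
qed

lemma combine_restrict:
  assumes "A \<inter> B = {}" "A \<union> B = {..<n}" "s \<in> Ins n c"
  shows "combine A (restrict s A) y = combine A s y" "combine A x (restrict s B) = combine A x s"
  using assms unfolding combine_def Ins_def by (auto simp: fun_eq_iff PiE_iff extensional_def)

lemma additive_imp_bipartite_linear:
  assumes partition: "A \<noteq> {}" "B \<noteq> {}" "A \<inter> B = {}" "A \<union> B = {..<n}"
    and "d > 0" and s0: "s0 \<in> Ins n c"
    and additive: "\<And>s. s \<in> Ins n c \<Longrightarrow>
      int d dvd int (f s) + int (f s0) - int (f (combine A s s0)) - int (f (combine A s0 s))"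
  shows "bipartite_linear n d c f"
proof -
  define fA where "fA x = nat (int (f (combine A x s0)) mod int d)" for x
  define fB where "fB y = nat ((int (f (combine A s0 y)) - int (f s0)) mod int d)" for y
  have decomp: "fA (restrict s A) < d \<and> fB (restrict s B) < d
      \<and> f s mod d = (fA (restrict s A) + fB (restrict s B)) mod d" if s: "s \<in> Ins n c" for s
  proof -
    have fA: "int (fA (restrict s A)) = int (f (combine A s s0)) mod int d"
      unfolding fA_def combine_restrict[OF partition(3,4) s] using \<open>d > 0\<close> by simp
    have fB: "int (fB (restrict s B)) = (int (f (combine A s0 s)) - int (f s0)) mod int d"
      unfolding fB_def combine_restrict[OF partition(3,4) s] using \<open>d > 0\<close> by simp
    have "int (fA (restrict s A)) < int d" "int (fB (restrict s B)) < int d"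
      unfolding fA fB using \<open>d > 0\<close> by simp_all
    then have "fA (restrict s A) < d" "fB (restrict s B) < d" by simp_all
    have "[int (f s) = int (f (combine A s s0)) + (int (f (combine A s0 s)) - int (f s0))] (mod int d)"
      using additive[OF s] by (simp add: cong_iff_dvd_diff algebra_simps)
    also have "[int (f (combine A s s0)) + (int (f (combine A s0 s)) - int (f s0))
        = int (fA (restrict s A)) + int (fB (restrict s B))] (mod int d)"
      unfolding fA fB by (intro cong_add) (simp_all add: cong_def)
    finally have "[f s = fA (restrict s A) + fB (restrict s B)] (mod d)"
      by (simp add: cong_int_iff flip: of_nat_add)
    then have "f s mod d = (fA (restrict s A) + fB (restrict s B)) mod d" by (simp add: cong_def)
    with \<open>fA (restrict s A) < d\<close> \<open>fB (restrict s B) < d\<close> show ?thesis by blast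
  qed
  show ?thesis
    unfolding bipartite_linear_def
  proof (intro exI conjI)
    show "\<forall>s\<in>Ins n c. fA (restrict s A) < d \<and> fB (restrict s B) < d
      \<and> f s mod d = (fA (restrict s A) + fB (restrict s B)) mod d"
      using decomp by blast
  qed (rule partition)+
qed

lemma mixed_diff_dvd_imp_bipartite_linear:
  assumes partition: "A \<noteq> {}" "B \<noteq> {}" "A \<inter> B = {}" "A \<union> B = {..<n}"
    and "\<forall>j<n. c j > 0" "d > 0"
    and mixed: "\<And>s j v k u. s \<in> Ins n c \<Longrightarrow> j \<in> A \<Longrightarrow> v < c j \<Longrightarrow> k \<in> B \<Longrightarrow> u < c k \<Longrightarrow>
      int d dvd mixed_diff (\<lambda>s. int (f s)) s j v k u"
  shows "bipartite_linear n d c f"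
proof (rule additive_imp_bipartite_linear[OF partition \<open>d > 0\<close>])
  show "restrict (\<lambda>_. 0) {..<n} \<in> Ins n c" using Ins_nonempty \<open>\<forall>j<n. c j > 0\<close> .
  then show "int d dvd int (f s) + int (f (restrict (\<lambda>_. 0) {..<n}))
      - int (f (combine A s (restrict (\<lambda>_. 0) {..<n}))) - int (f (combine A (restrict (\<lambda>_. 0) {..<n}) s))"
    if "s \<in> Ins n c" for s
    using mixed_diff_dvd_imp_additive[OF partition(3,4) _ that, where F="\<lambda>s. int (f s)"] mixed by blast
qed

section \<open>Residue distributions of weighted sums\<close>

definition residue_prob ::
  "nat \<Rightarrow> nat \<Rightarrow> ((nat \<Rightarrow> nat) \<Rightarrow> (nat \<Rightarrow> nat) \<Rightarrow> real) \<Rightarrow> (nat \<Rightarrow> int) \<Rightarrow> (nat \<Rightarrow> nat) \<Rightarrow> int \<Rightarrow> real" where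
  "residue_prob n d p w s z = (\<Sum>m\<in>{m\<in>Outs n d. [wsum n w m = z] (mod int d)}. p m s)"

lemma residue_prob_mod: "residue_prob n d p w s (z mod int d) = residue_prob n d p w s z"
  by (simp add: residue_prob_def)

lemma residue_prob_eq_sum_if:
  "residue_prob n d p w s z = (\<Sum>m\<in>Outs n d. if [wsum n w m = z] (mod int d) then p m s else 0)"
  unfolding residue_prob_def by (simp add: sum.inter_filter finite_Outs)

lemma sum_residue_prob:
  fixes p :: "(nat \<Rightarrow> nat) \<Rightarrow> (nat \<Rightarrow> nat) \<Rightarrow> real"
  assumes "finite T"
  shows "(\<Sum>t\<in>T. residue_prob n d p (W t) s (z t))
       = (\<Sum>m\<in>Outs n d. card {t\<in>T. [wsum n (W t) m = z t] (mod int d)} * p m s)"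
proof -
  have "(\<Sum>t\<in>T. residue_prob n d p (W t) s (z t))
      = (\<Sum>m\<in>Outs n d. \<Sum>t\<in>T. if [wsum n (W t) m = z t] (mod int d) then p m s else 0)"
    unfolding residue_prob_eq_sum_if by (rule sum.swap)
  then show ?thesis by (simp add: sum_if_const assms)
qed

lemma wsum_cong_restrict:
  assumes "S = {j. j < n \<and> \<not> int d dvd w j}"
  shows "[wsum n w m = wsum n w (restrict m S)] (mod int d)"
  unfolding wsum_def
proof (rule cong_sum)
  fix j assume "j \<in> {..<n}"
  show "[w j * int (m j) = w j * int (restrict m S j)] (mod int d)"
  proof (cases "j \<in> S")
    case False
    then have "int d dvd w j" using assms \<open>j \<in> {..<n}\<close> by auto
    then have "[w j * x = 0] (mod int d)" for x by (simp add: cong_0_iff)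
    then show ?thesis by (meson cong_sym cong_trans)
  qed simp
qed

lemma eq_inverse_if_mixture_eq:
  fixes d x p :: real
  assumes "(d * x - d) / d = (d * x - d) * p + (x - d) * (1 - p)" and "d > 1"
  shows "p = 1 / x"
proof -
  have "(d * x - d) / d = x - 1" using \<open>d > 1\<close> by (simp add: field_simps)
  with assms(1) have "(p * x - 1) * (d - 1) = 0" by algebra
  then have "p * x = 1" using \<open>d > 1\<close> by simp
  moreover from this have "x \<noteq> 0" by auto
  ultimately show ?thesis by (simp add: field_simps)
qed

context
  fixes n d :: nat and c :: "nat \<Rightarrow> nat" and f :: "(nat \<Rightarrow> nat) \<Rightarrow> nat"
    and p :: "(nat \<Rightarrow> nat) \<Rightarrow> (nat \<Rightarrow> nat) \<Rightarrow> real"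
  assumes cond: "is_cond_dist n d c p" and sure: "\<forall>s\<in>Ins n c. prob_sum_eq n d f p s = 1"
    and ns: "non_signaling n d c p"
begin

lemma prob_eq_0_outside:
  assumes s: "s \<in> Ins n c" and "m \<in> Outs n d" and bad: "(\<Sum>j<n. m j) mod d \<noteq> f s mod d"
  shows "p m s = 0"
proof -
  define G where "G = {m\<in>Outs n d. (\<Sum>j<n. m j) mod d = f s mod d}"
  have "(\<Sum>m\<in>Outs n d. p m s) = 1" "\<forall>m\<in>Outs n d. p m s \<ge> 0"
    using cond s unfolding is_cond_dist_def by auto
  moreover have "(\<Sum>m\<in>G. p m s) = 1" using sure s unfolding prob_sum_eq_def G_def by blast
  moreover have "(\<Sum>m\<in>Outs n d. p m s) = (\<Sum>m\<in>Outs n d - G. p m s) + (\<Sum>m\<in>G. p m s)"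
    by (rule sum.subset_diff) (auto simp: G_def finite_Outs)
  ultimately have "(\<Sum>m\<in>Outs n d - G. p m s) = 0" "\<forall>m\<in>Outs n d - G. p m s \<ge> 0" by auto
  then have "\<forall>m\<in>Outs n d - G. p m s = 0"
    using sum_nonneg_eq_0_iff[of "Outs n d - G" "\<lambda>m. p m s"] finite_Outs by auto
  then show ?thesis using assms unfolding G_def by blast
qed

lemma residue_prob_sum:
  assumes "d > 0" "s \<in> Ins n c"
  shows "(\<Sum>z\<in>{0..<int d}. residue_prob n d p w s z) = 1"
proof -
  have "(\<Sum>z\<in>{0..<int d}. residue_prob n d p w s z)
      = (\<Sum>z\<in>{0..<int d}. \<Sum>m\<in>{m\<in>Outs n d. wsum n w m mod int d = z}. p m s)"
    unfolding residue_prob_def by (intro sum.cong) (auto simp: cong_def)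
  also have "\<dots> = (\<Sum>m\<in>Outs n d. p m s)"
    by (rule sum.group) (use \<open>d > 0\<close> in \<open>auto simp: finite_Outs\<close>)
  also have "\<dots> = 1" using cond assms(2) unfolding is_cond_dist_def by blast
  finally show ?thesis .
qed

lemma residue_prob_uniform_if_periodic:
  assumes "d > 0" "s \<in> Ins n c" and per: "\<And>y. residue_prob n d p w s (y + u) = residue_prob n d p w s y"
    and "coprime u (int d)"
  shows "residue_prob n d p w s z = 1 / real d"
proof -
  have const: "residue_prob n d p w s y = residue_prob n d p w s 0" for y
    by (rule periodic_coprime_imp_constant[where h="residue_prob n d p w s", OF residue_prob_mod per])
      (rule assms(4))
  have "1 = (\<Sum>z\<in>{0..<int d}. residue_prob n d p w s z)" using residue_prob_sum assms(1,2) by simp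
  also have "\<dots> = (\<Sum>z\<in>{0..<int d}. residue_prob n d p w s 0)" by (rule sum.cong[OF refl const])
  also have "\<dots> = real d * residue_prob n d p w s 0" by simp
  finally show ?thesis using \<open>d > 0\<close> const[of z] by (simp add: field_simps)
qed

lemma residue_prob_shift:
  assumes s: "s \<in> Ins n c"
  shows "residue_prob n d p w s z = residue_prob n d p (\<lambda>j. w j - a) s (z - a * int (f s))"
  unfolding residue_prob_eq_sum_if
proof (rule sum.cong[OF refl])
  fix m assume m: "m \<in> Outs n d"
  show "(if [wsum n w m = z] (mod int d) then p m s else 0)
      = (if [wsum n (\<lambda>j. w j - a) m = z - a * int (f s)] (mod int d) then p m s else 0)"
  proof (cases "(\<Sum>j<n. m j) mod d = f s mod d")
    case True
    then have "[int (\<Sum>j<n. m j) = int (f s)] (mod int d)" unfolding cong_def by (metis of_nat_mod)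
    then have "[a * int (\<Sum>j<n. m j) = a * int (f s)] (mod int d)" by (rule cong_scalar_left)
    moreover have "wsum n (\<lambda>j. w j - a) m = wsum n w m - a * int (\<Sum>j<n. m j)"
      by (simp add: wsum_def algebra_simps sum_subtractf sum_distrib_left)
    ultimately have shift: "[wsum n (\<lambda>j. w j - a) m = wsum n w m - a * int (f s)] (mod int d)"
      by (simp add: cong_diff)
    have "[wsum n (\<lambda>j. w j - a) m = z - a * int (f s)] (mod int d)
        \<longleftrightarrow> [wsum n w m - a * int (f s) = z - a * int (f s)] (mod int d)"
      using shift by (meson cong_sym cong_trans)
    also have "\<dots> \<longleftrightarrow> [wsum n w m = z] (mod int d)" by (simp add: cong_iff_dvd_diff)
    finally show ?thesis by simp
  next
    case False
    then show ?thesis using prob_eq_0_outside[OF s m] by simp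
  qed
qed

lemma residue_prob_local:
  assumes s: "s \<in> Ins n c" and s': "s' \<in> Ins n c" and agree: "\<forall>j<n. \<not> int d dvd w j \<longrightarrow> s j = s' j"
  shows "residue_prob n d p w s z = residue_prob n d p w s' z"
proof -
  define S where "S = {j. j < n \<and> \<not> int d dvd w j}"
  define R where "R = (\<lambda>m. restrict m S) ` Outs n d"
  have via_marginal: "residue_prob n d p w x z
      = (\<Sum>y\<in>R. if [wsum n w y = z] (mod int d) then marginal n d p S x y else 0)" for x
  proof -
    have "residue_prob n d p w x z
        = (\<Sum>m\<in>Outs n d. if [wsum n w (restrict m S) = z] (mod int d) then p m x else 0)"
    proof -
      have "[wsum n w m = z] (mod int d) \<longleftrightarrow> [wsum n w (restrict m S) = z] (mod int d)" for m
        using wsum_cong_restrict[OF S_def, of m] by (meson cong_sym cong_trans)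
      then show ?thesis unfolding residue_prob_eq_sum_if by simp
    qed
    also have "\<dots> = (\<Sum>y\<in>R. \<Sum>m\<in>{m\<in>Outs n d. restrict m S = y}.
        if [wsum n w (restrict m S) = z] (mod int d) then p m x else 0)"
      by (rule sum.group[symmetric]) (auto simp: R_def finite_Outs)
    also have "\<dots> = (\<Sum>y\<in>R. \<Sum>m\<in>{m\<in>Outs n d. restrict m S = y}.
        if [wsum n w y = z] (mod int d) then p m x else 0)"
      by (intro sum.cong refl) auto
    also have "\<dots> = (\<Sum>y\<in>R. if [wsum n w y = z] (mod int d) then marginal n d p S x y else 0)"
      unfolding marginal_def by (intro sum.cong refl) (simp split: if_split)
    finally show ?thesis .
  qed
  have "S \<subseteq> {..<n}" by (auto simp: S_def)
  moreover have "restrict s S = restrict s' S" using agree by (auto simp: S_def restrict_def)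
  ultimately have marg: "marginal n d p S s y = marginal n d p S s' y" for y
    using ns s s' unfolding non_signaling_def by blast
  show ?thesis unfolding via_marginal by (rule sum.cong[OF refl]) (simp add: marg)
qed

lemma residue_prob_fun_upd:
  assumes s: "s \<in> Ins n c" and "j < n" "v < c j"
  shows "residue_prob n d p w (s(j := v)) z = residue_prob n d p w s (z + w j * (int (f s) - int (f (s(j := v)))))"
proof -
  have s': "s(j := v) \<in> Ins n c" using Ins_fun_upd assms .
  have "residue_prob n d p w (s(j := v)) z = residue_prob n d p (\<lambda>i. w i - w j) (s(j := v)) (z - w j * int (f (s(j := v))))"
    by (rule residue_prob_shift[OF s'])
  also have "\<dots> = residue_prob n d p (\<lambda>i. w i - w j) s (z - w j * int (f (s(j := v))))"
    by (rule residue_prob_local[OF s' s]) auto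
  also have "\<dots> = residue_prob n d p w s (z + w j * (int (f s) - int (f (s(j := v)))))"
    using residue_prob_shift[OF s, of w "z + w j * (int (f s) - int (f (s(j := v))))" "w j"]
    by (simp add: algebra_simps)
  finally show ?thesis .
qed

text \<open>Updating \<open>j\<close> then \<open>k\<close>, or \<open>k\<close> then \<open>j\<close>, leads to the same input string; comparing the
  shifts accumulated along the two paths gives the period.\<close>

lemma residue_prob_period:
  assumes s: "s \<in> Ins n c" and "j < n" "k < n" "j \<noteq> k" "v < c j" "u < c k"
  shows "residue_prob n d p w s (y + (w k - w j) * mixed_diff (\<lambda>s. int (f s)) s j v k u) = residue_prob n d p w s y"
proof -
  define F where "F = (\<lambda>s. int (f s))"
  have s1: "s(j := v) \<in> Ins n c" and s2: "s(k := u) \<in> Ins n c" using Ins_fun_upd assms by auto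
  have twist: "s(k := u, j := v) = s(j := v, k := u)" using \<open>j \<noteq> k\<close> by (auto simp: fun_eq_iff)
  have path1: "residue_prob n d p w (s(j := v, k := u)) x
      = residue_prob n d p w s (x + w k * (F (s(j := v)) - F (s(j := v, k := u))) + w j * (F s - F (s(j := v))))" for x
    using residue_prob_fun_upd[OF s1 \<open>k < n\<close> \<open>u < c k\<close>] residue_prob_fun_upd[OF s \<open>j < n\<close> \<open>v < c j\<close>]
    unfolding F_def by simp
  have path2: "residue_prob n d p w (s(j := v, k := u)) x
      = residue_prob n d p w s (x + w j * (F (s(k := u)) - F (s(j := v, k := u))) + w k * (F s - F (s(k := u))))" for x
    using residue_prob_fun_upd[OF s2 \<open>j < n\<close> \<open>v < c j\<close>] residue_prob_fun_upd[OF s \<open>k < n\<close> \<open>u < c k\<close>]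
    unfolding F_def twist by simp
  define x where "x = y - (w k * (F (s(j := v)) - F (s(j := v, k := u))) + w j * (F s - F (s(j := v))))"
  have E2: "x + w j * (F (s(k := u)) - F (s(j := v, k := u))) + w k * (F s - F (s(k := u)))
      = y + (w k - w j) * mixed_diff F s j v k u"
    unfolding x_def mixed_diff_def by (simp add: algebra_simps)
  have "residue_prob n d p w s y = residue_prob n d p w (s(j := v, k := u)) x"
    using path1[of x] by (simp add: x_def)
  also have "\<dots> = residue_prob n d p w s (y + (w k - w j) * mixed_diff F s j v k u)"
    using path2[of x] unfolding E2 .
  finally show ?thesis by (simp add: F_def)
qed

lemma residue_prob_uniform_propagates:
  assumes s0: "s0 \<in> Ins n c" and unif: "\<And>z. residue_prob n d p w s0 z = 1 / real d" and s: "s \<in> Ins n c"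
  shows "residue_prob n d p w s z = 1 / real d"
proof -
  have "\<forall>z. residue_prob n d p w s z = 1 / real d"
  proof (rule Ins_fun_upd_induct[where K="{..<n}", OF s0 s])
    fix x k v assume "x \<in> Ins n c" "k < n" "v < c k" and "\<forall>z. residue_prob n d p w x z = 1 / real d"
    then show "\<forall>z. residue_prob n d p w (x(k := v)) z = 1 / real d" by (simp add: residue_prob_fun_upd)
  qed (use unif in auto)
  then show ?thesis ..
qed

lemma residue_prob_uniform:
  assumes "prime d" and "\<forall>j<n. c j > 0" and not_bl: "\<not> bipartite_linear n d c f"
    and "j1 < n" "k1 < n" "\<not> int d dvd w j1 - w k1" and s: "s \<in> Ins n c"
  shows "residue_prob n d p w s z = 1 / real d"
proof -
  have "d > 0" using \<open>prime d\<close> prime_gt_0_nat by blast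
  define A where "A = {i. i < n \<and> int d dvd w i - w j1}"
  define B where "B = {..<n} - A"
  have "j1 \<in> A" "k1 \<in> B"
    using assms(4-6) by (auto simp: A_def B_def dvd_diff_commute)
  then have partition: "A \<noteq> {}" "B \<noteq> {}" "A \<inter> B = {}" "A \<union> B = {..<n}"
    by (auto simp: A_def B_def)
  obtain s0 j v k u where s0: "s0 \<in> Ins n c" and jk: "j \<in> A" "v < c j" "k \<in> B" "u < c k"
    and not_dvd: "\<not> int d dvd mixed_diff (\<lambda>s. int (f s)) s0 j v k u"
    using mixed_diff_dvd_imp_bipartite_linear[OF partition assms(2) \<open>d > 0\<close>] not_bl by blast
  have "\<not> int d dvd w k - w j"
  proof
    assume "int d dvd w k - w j"
    moreover have "int d dvd w j - w j1" using jk by (simp add: A_def)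
    ultimately have "int d dvd w k - w j1" using dvd_add by fastforce
    then show False using jk by (auto simp: A_def B_def)
  qed
  then have "\<not> int d dvd (w k - w j) * mixed_diff (\<lambda>s. int (f s)) s0 j v k u"
    using not_dvd \<open>prime d\<close> by (simp add: prime_dvd_mult_iff)
  moreover have "prime (int d)" using \<open>prime d\<close> by simp
  ultimately have "coprime (int d) ((w k - w j) * mixed_diff (\<lambda>s. int (f s)) s0 j v k u)"
    by (intro prime_imp_coprime)
  then have "coprime ((w k - w j) * mixed_diff (\<lambda>s. int (f s)) s0 j v k u) (int d)"
    by (rule coprime_commute[THEN iffD1])
  moreover have "j < n" "k < n" "j \<noteq> k" using jk partition by (auto simp: B_def)
  ultimately have "residue_prob n d p w s0 z' = 1 / real d" for z'
    using residue_prob_uniform_if_periodic[OF \<open>d > 0\<close> s0] residue_prob_period[OF s0] jk by blast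
  then show ?thesis using residue_prob_uniform_propagates[OF s0 _ s] by blast
qed

lemma sum_prob_two_values:
  assumes s: "s \<in> Ins n c" and m0: "m0 \<in> Outs n d"
    and g: "\<And>m. m \<in> Outs n d \<Longrightarrow> m \<noteq> m0 \<Longrightarrow> (\<Sum>j<n. m j) mod d = f s mod d \<Longrightarrow> g m = b"
  shows "(\<Sum>m\<in>Outs n d. g m * p m s) = g m0 * p m0 s + b * (1 - p m0 s)"
proof -
  have "g m * p m s = b * p m s" if "m \<in> Outs n d - {m0}" for m
    using that g prob_eq_0_outside[OF s] by (cases "(\<Sum>j<n. m j) mod d = f s mod d") auto
  then have "(\<Sum>m\<in>Outs n d - {m0}. g m * p m s) = (\<Sum>m\<in>Outs n d - {m0}. b * p m s)"
    by (rule sum.cong[OF refl])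
  also have "\<dots> = b * (\<Sum>m\<in>Outs n d - {m0}. p m s)" by (simp add: sum_distrib_left)
  finally have "(\<Sum>m\<in>Outs n d - {m0}. g m * p m s) = b * (\<Sum>m\<in>Outs n d - {m0}. p m s)" .
  moreover have "(\<Sum>m\<in>Outs n d - {m0}. p m s) = 1 - p m0 s"
    using cond s sum.remove[OF finite_Outs m0, of "\<lambda>m. p m s"] unfolding is_cond_dist_def by auto
  ultimately show ?thesis by (simp add: sum.remove[OF finite_Outs m0])
qed

text \<open>Double counting over the non-constant weight vectors \<open>t\<close>: their residue distributions
  are uniform, while the outcome \<open>m0\<close> agrees with itself for every \<open>t\<close> and with any other
  admissible outcome for exactly \<open>d\<^sup>n\<^sup>-\<^sup>1 - d\<close> of them.\<close>

lemma prob_eq_if_residue_prob_uniform: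
  assumes "prime d" "n \<ge> 2" and s: "s \<in> Ins n c" and m0: "m0 \<in> Outs n d"
    and good: "(\<Sum>j<n. m0 j) mod d = f s mod d"
    and unif: "\<And>w z j k. j < n \<Longrightarrow> k < n \<Longrightarrow> \<not> int d dvd w j - w k \<Longrightarrow> residue_prob n d p w s z = 1 / real d"
  shows "p m0 s = 1 / real d ^ (n - 1)"
proof -
  have "d > 1" using \<open>prime d\<close> prime_gt_1_nat by blast
  define T where "T = {t\<in>Outs n d. \<exists>j<n. \<exists>k<n. t j \<noteq> t k}"
  define N where "N m = card {t\<in>T. [wsum n (\<lambda>i. int (t i)) m = wsum n (\<lambda>i. int (t i)) m0] (mod int d)}" for m
  have "residue_prob n d p (\<lambda>i. int (t i)) s z = 1 / real d" if "t \<in> T" for t z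
  proof -
    obtain j k where "j < n" "k < n" "t j \<noteq> t k" "t j < d" "t k < d"
      using \<open>t \<in> T\<close> Outs_less unfolding T_def by blast
    moreover from this have "\<not> int d dvd int (t j) - int (t k)"
      using dvd_imp_le_int[of "int (t j) - int (t k)" "int d"] by linarith
    ultimately show ?thesis by (intro unif) auto
  qed
  then have "card T / real d = (\<Sum>t\<in>T. residue_prob n d p (\<lambda>i. int (t i)) s (wsum n (\<lambda>i. int (t i)) m0))"
    by simp
  also have "\<dots> = (\<Sum>m\<in>Outs n d. N m * p m s)"
    unfolding N_def by (rule sum_residue_prob) (simp add: T_def finite_Outs)
  also have "\<dots> = N m0 * p m0 s + (d ^ (n - 1) - d) * (1 - p m0 s)"
  proof (rule sum_prob_two_values[OF s m0])
    fix m assume m: "m \<in> Outs n d" "m \<noteq> m0" and "(\<Sum>j<n. m j) mod d = f s mod d"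
    then have "[(\<Sum>j<n. m j) = (\<Sum>j<n. m0 j)] (mod d)" using good by (simp add: cong_def)
    then show "real (N m) = real (d ^ (n - 1) - d)"
      unfolding N_def T_def using card_nonconstant_wsum_agree[OF \<open>prime d\<close> m(1) m0 m(2)]
      by (simp add: conj_commute conj_left_commute)
  qed
  also have "N m0 = card T" by (simp add: N_def)
  finally have eq: "card T / real d = card T * p m0 s + (d ^ (n - 1) - d) * (1 - p m0 s)" .
  define x where "x = real d ^ (n - 1)"
  have "d \<le> d ^ n" "d \<le> d ^ (n - 1)" using \<open>d > 1\<close> \<open>n \<ge> 2\<close> by (simp_all add: self_le_power)
  have "card T = d ^ n - d" unfolding T_def using \<open>n \<ge> 2\<close> by (intro card_Outs_nonconstant) simp
  then have "real (card T) = real (d ^ n) - d" by (simp only: of_nat_diff[OF \<open>d \<le> d ^ n\<close>])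
  also have "real (d ^ n) = real d * x" using power_minus_mult[of n "real d"] \<open>n \<ge> 2\<close> by (simp add: x_def mult.commute)
  finally have card_T: "real (card T) = real d * x - d" .
  have "real (d ^ (n - 1) - d) = x - d" unfolding x_def of_nat_diff[OF \<open>d \<le> d ^ (n - 1)\<close>] by simp
  with eq card_T have "(real d * x - d) / d = (real d * x - d) * p m0 s + (x - d) * (1 - p m0 s)"
    by simp
  then show ?thesis unfolding x_def by (rule eq_inverse_if_mixture_eq) (use \<open>d > 1\<close> in simp)
qed

lemma eq_box_dist_if_not_bipartite_linear:
  assumes "prime d" "n \<ge> 2" "\<forall>j<n. c j > 0" "\<not> bipartite_linear n d c f"
    and s: "s \<in> Ins n c" and m: "m \<in> Outs n d"
  shows "p m s = box_dist n d f m s"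
proof (cases "(\<Sum>j<n. m j) mod d = f s mod d")
  case True
  have "p m s = 1 / real d ^ (n - 1)"
    using prob_eq_if_residue_prob_uniform[OF assms(1,2) s m True] residue_prob_uniform[OF assms(1,3,4) _ _ _ s]
    by blast
  then show ?thesis using True by (simp add: box_dist_def)
next
  case False
  then show ?thesis using prob_eq_0_outside[OF s m] by (simp add: box_dist_def)
qed

end

theorem theorem2:
  fixes n d :: nat and c :: "nat \<Rightarrow> nat" and f :: "(nat \<Rightarrow> nat) \<Rightarrow> nat"
  assumes "n \<ge> 2" and "\<forall>j<n. c j \<ge> 2" and "prime d"
    and "\<forall>s\<in>Ins n c. f s < d"
  shows "is_cond_dist n d c (box_dist n d f)
    \<and> non_signaling n d c (box_dist n d f)
    \<and> (\<forall>s\<in>Ins n c. prob_sum_eq n d f (box_dist n d f) s = 1)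
    \<and> ((\<forall>p. is_cond_dist n d c p \<and> non_signaling n d c p
            \<and> (\<forall>s\<in>Ins n c. prob_sum_eq n d f p s = 1)
            \<longrightarrow> (\<forall>s\<in>Ins n c. \<forall>m\<in>Outs n d. p m s = box_dist n d f m s))
       \<longleftrightarrow> \<not> bipartite_linear n d c f)"
proof -
  have "n > 0" using \<open>n \<ge> 2\<close> by simp
  have "d \<ge> 2" using \<open>prime d\<close> by (rule prime_ge_2_nat)
  have c_pos: "\<forall>j<n. c j > 0" using assms(2) by (auto intro: less_le_trans[OF pos2])
  have "(\<forall>p. is_cond_dist n d c p \<and> non_signaling n d c p
            \<and> (\<forall>s\<in>Ins n c. prob_sum_eq n d f p s = 1)
            \<longrightarrow> (\<forall>s\<in>Ins n c. \<forall>m\<in>Outs n d. p m s = box_dist n d f m s))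
       \<longleftrightarrow> \<not> bipartite_linear n d c f" (is "?unique \<longleftrightarrow> _")
  proof
    assume ?unique
    then show "\<not> bipartite_linear n d c f"
      using bipartite_linear_imp_not_unique[OF \<open>d \<ge> 2\<close> c_pos] by blast
  next
    assume "\<not> bipartite_linear n d c f"
    then show ?unique
      using eq_box_dist_if_not_bipartite_linear[OF _ _ _ \<open>prime d\<close> \<open>n \<ge> 2\<close> c_pos] by blast
  qed
  then show ?thesis
    using box_dist_is_cond_dist box_dist_non_signaling box_dist_prob_sum_eq \<open>n > 0\<close> \<open>d \<ge> 2\<close> by simp
qed

end
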